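(* In the standing setting below, let $2\leq\ell\leq k-2$ and let $M_k$ be the set of $k$-cycles $(x_1,\dots,x_k)\in X_1\times\dots\times X_k$ such that $(x_1,\dots,x_\ell)$ is a bad $[\ell]$-tuple, $(x_1,\dots,x_{\ell-1})$ is not a bad $[\ell-1]$-tuple, and $(x_1,\dots,x_{\ell-1},x_k)$ is not a bad $([\ell-1]\cup\{k\})$-tuple. Then for every $(x_\ell,\dots,x_{k-1})\in X_\ell\times\dots\times X_{k-1}$ there are at most $\frac12\alpha^{\ell-1}N^{\ell-1}$ $k$-cycles in $M_k$ whose coordinates $\ell,\dots,k-1$ are $x_\ell,\dots,x_{k-1}$.
   Context: Let $p$ be a fixed prime, $n\geq1$, $N=p^n$, $[m]=\{1,\dots,m\}$. For sets $X_1,\dots,X_k\subseteq\mathbb{F}_p^n$, a $k$-cycle is a tuple $(x_1,\dots,x_k)\in X_1\times\dots\times X_k$ with $x_1+\dots+x_k=0$. Standing setting: $k\geq4$, $X_1,\dots,X_k\subseteq\mathbb{F}_p^n$, the number of $k$-cycles in $X_1\times\dots\times X_k$ equals $\delta'N^{k-1}$ with $\delta'>0$, and $\theta\geq 1$ is such that for each $i\in[k]$ every point of $X_i$ occurs as $x_i$ in at most $\theta\delta'N^{k-2}$ $k$-cycles. Put $\alpha=(\theta\delta')^{1/(k-2)}$. For $I\subseteq[k]$ with $1\leq|I|\leq k-2$, an $I$-tuple is an element $(x_i)_{i\in I}\in\prod_{i\in I}X_i$; it is called bad if there are at least $2\alpha^{k-|I|-1}N^{k-|I|-1}$ $k$-cycles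 $(x_1,\dots,x_k)\in X_1\times\dots\times X_k$ whose coordinates indexed by $I$ coincide with the given tuple. *)

theory Defs
  imports Complex_Main "HOL-Library.FuncSet" "HOL-Computational_Algebra.Primes"
begin

text \<open>Elements of F_p^n are represented as functions nat => nat with values in {0..<p}
  on coordinates 0..<n and 0 elsewhere; addition is coordinatewise mod p.\<close>

definition Fpn :: "nat \<Rightarrow> nat \<Rightarrow> (nat \<Rightarrow> nat) set" where
  "Fpn p n = {v. (\<forall>i<n. v i < p) \<and> (\<forall>i\<ge>n. v i = 0)}"

definition cycles :: "nat \<Rightarrow> nat \<Rightarrow> nat \<Rightarrow> (nat \<Rightarrow> (nat \<Rightarrow> nat) set) \<Rightarrow> (nat \<Rightarrow> (nat \<Rightarrow> nat)) set" where
  "cycles p n k X = {x \<in> PiE {1..k} X. \<forall>i<n. (\<Sum>j=1..k. x j i) mod p = 0}"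

definition bad :: "nat \<Rightarrow> nat \<Rightarrow> nat \<Rightarrow> (nat \<Rightarrow> (nat \<Rightarrow> nat) set) \<Rightarrow> real \<Rightarrow> nat set \<Rightarrow> (nat \<Rightarrow> (nat \<Rightarrow> nat)) \<Rightarrow> bool" where
  "bad p n k X \<alpha> I t \<longleftrightarrow> t \<in> PiE I X \<and>
     real (card {x \<in> cycles p n k X. \<forall>i\<in>I. x i = t i})
       \<ge> 2 * \<alpha> ^ (k - card I - 1) * (real p ^ n) ^ (k - card I - 1)"

end

theory Submission
  imports Defs "HOL-Number_Theory.Cong"
begin

text \<open>Each bad \<open>[\<ell>]\<close>-tuple is extended by at least \<open>2 \<alpha>^(k-\<ell>-1) N^(k-\<ell>-1)\<close>
  cycles. For distinct cycles of \<open>M\<^sub>k\<close> with the same coordinates \<open>\<ell>, \<dots>, k-1\<close> these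
  extension sets are disjoint, because a \<open>k\<close>-cycle is determined by its first \<open>k-1\<close>
  coordinates. They all consist of cycles through the fixed point \<open>x\<^sub>\<ell>\<close>, of which there are
  at most \<open>\<theta>\<delta>' N^(k-2) = \<alpha>^(k-2) N^(k-2)\<close>; dividing gives the bound. Only the badness
  of \<open>(x\<^sub>1, \<dots>, x\<^sub>\<ell>)\<close> is needed.\<close>

lemma cycles_eq_if_eq_below_last:
  assumes "x \<in> cycles p n k X" "x' \<in> cycles p n k X" "k \<ge> 1"
    and "X k \<subseteq> Fpn p n" and "\<forall>j\<in>{1..k-1}. x j = x' j"
  shows "x = x'"
proof -
  have last: "x k = x' k"
  proof
    fix i
    have in_Fpn: "x k \<in> Fpn p n" "x' k \<in> Fpn p n"
      using assms(1-4) unfolding cycles_def by (auto simp: PiE_def Pi_def)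
    show "x k i = x' k i"
    proof (cases "i < n")
      case True
      obtain m where k: "k = Suc m" using assms(3) by (cases k) auto
      define s where "s = (\<Sum>j=1..k-1. x j i)"
      have "(\<Sum>j=1..k-1. x' j i) = s"
        unfolding s_def using assms(5) by simp
      moreover have "(\<Sum>j=1..k. x j i) mod p = 0" "(\<Sum>j=1..k. x' j i) mod p = 0"
        using assms(1,2) True unfolding cycles_def by auto
      ultimately have "[s + x k i = s + x' k i] (mod p)"
        unfolding s_def k cong_def by (simp add: sum.cl_ivl_Suc)
      hence "[x k i = x' k i] (mod p)" by (simp add: cong_add_lcancel_nat)
      moreover have "x k i < p" "x' k i < p" using in_Fpn True unfolding Fpn_def by auto
      ultimately show ?thesis by (rule cong_less_modulus_unique_nat)
    next
      case False
      then show ?thesis using in_Fpn unfolding Fpn_def by auto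
    qed
  qed
  show ?thesis
  proof
    fix j
    show "x j = x' j"
    proof (cases "j \<in> {1..k}")
      case True
      then show ?thesis using last assms(5) by (cases "j = k") auto
    next
      case False
      then show ?thesis using assms(1,2) unfolding cycles_def by (auto simp: PiE_def extensional_def)
    qed
  qed
qed

lemma card_mult_le_card_if_disjoint_subsets:
  assumes "finite D" and "\<And>x. x \<in> S \<Longrightarrow> E x \<subseteq> D"
    and "\<And>x. x \<in> S \<Longrightarrow> B \<le> real (card (E x))"
    and "\<And>x x'. x \<in> S \<Longrightarrow> x' \<in> S \<Longrightarrow> x \<noteq> x' \<Longrightarrow> E x \<inter> E x' = {}"
  shows "real (card S) * B \<le> real (card D)"
proof (cases "finite S")
  case True
  have finite_E: "finite (E x)" if "x \<in> S" for x
    using assms(1,2) that by (meson finite_subset)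
  have "real (card S) * B = (\<Sum>x\<in>S. B)" by simp
  also have "\<dots> \<le> (\<Sum>x\<in>S. real (card (E x)))" using assms(3) by (rule sum_mono)
  also have "\<dots> = real (card (\<Union>x\<in>S. E x))"
    using card_UN_disjoint[OF True, of E] finite_E assms(4) by simp
  also have "\<dots> \<le> real (card D)"
    using assms(1,2) by (simp add: card_mono UN_least)
  finally show ?thesis .
qed simp

lemma card_bad_prefix_cycles_with_fixed_tail:
  assumes "finite (cycles p n k X)" and "X k \<subseteq> Fpn p n" and "1 \<le> l" and "l < k"
  shows "real (card {x \<in> cycles p n k X. bad p n k X \<alpha> {1..l} (restrict x {1..l})
                                            \<and> (\<forall>i\<in>{l..k-1}. x i = y i)})
           * (2 * \<alpha> ^ (k - l - 1) * (real p ^ n) ^ (k - l - 1))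
         \<le> real (card {x \<in> cycles p n k X. x l = y l})"
  (is "real (card ?S) * ?B \<le> real (card ?D)")
proof (rule card_mult_le_card_if_disjoint_subsets)
  define E where "E x = {z \<in> cycles p n k X. \<forall>i\<in>{1..l}. z i = x i}" for x
  show "finite ?D" using assms(1) by simp
  show "E x \<subseteq> ?D" if "x \<in> ?S" for x
    using that assms(3,4) unfolding E_def by auto
  show "?B \<le> real (card (E x))" if "x \<in> ?S" for x
  proof -
    have "E x = {z \<in> cycles p n k X. \<forall>i\<in>{1..l}. z i = restrict x {1..l} i}"
      unfolding E_def by auto
    then show ?thesis using that assms(3,4) unfolding bad_def by simp
  qed
  show "E x \<inter> E x' = {}" if "x \<in> ?S" "x' \<in> ?S" "x \<noteq> x'" for x x'
  proof
    show "E x \<inter> E x' \<subseteq> {}"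
    proof
      fix z assume z: "z \<in> E x \<inter> E x'"
      have "\<forall>j\<in>{1..k-1}. x j = x' j"
      proof
        fix j assume j: "j \<in> {1..k-1}"
        show "x j = x' j"
        proof (cases "j \<le> l")
          case True
          then show ?thesis using z j unfolding E_def by auto
        next
          case False
          then show ?thesis using that j by auto
        qed
      qed
      then have "x = x'"
        using that assms(2,4) by (intro cycles_eq_if_eq_below_last[of x p n k X x']) auto
      then show "z \<in> {}" using that(3) by simp
    qed
  qed simp
qed

theorem lemma8:
  fixes p n k l :: nat and X :: "nat \<Rightarrow> (nat \<Rightarrow> nat) set"
    and \<delta> \<theta> :: real
  assumes "prime p" and "n \<ge> 1" and "k \<ge> 4"
    and "\<forall>i\<in>{1..k}. X i \<subseteq> Fpn p n"
    and "\<delta> > 0"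
    and "real (card (cycles p n k X)) = \<delta> * (real p ^ n) ^ (k - 1)"
    and "\<theta> \<ge> 1"
    and "\<forall>i\<in>{1..k}. \<forall>a\<in>X i.
           real (card {x \<in> cycles p n k X. x i = a}) \<le> \<theta> * \<delta> * (real p ^ n) ^ (k - 2)"
    and "2 \<le> l" and "l \<le> k - 2"
  shows "\<forall>y \<in> PiE {l..k-1} X.
    real (card {x \<in> {x \<in> cycles p n k X.
             bad p n k X ((\<theta> * \<delta>) powr (1 / real (k - 2))) {1..l} (restrict x {1..l})
           \<and> \<not> bad p n k X ((\<theta> * \<delta>) powr (1 / real (k - 2))) {1..l-1} (restrict x {1..l-1})
           \<and> \<not> bad p n k X ((\<theta> * \<delta>) powr (1 / real (k - 2))) ({1..l-1} \<union> {k}) (restrict x ({1..l-1} \<union> {k}))}.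
         \<forall>i\<in>{l..k-1}. x i = y i})
    \<le> 1/2 * ((\<theta> * \<delta>) powr (1 / real (k - 2))) ^ (l - 1) * (real p ^ n) ^ (l - 1)"
proof
  fix y assume y: "y \<in> PiE {l..k-1} X"
  define \<alpha> where "\<alpha> = (\<theta> * \<delta>) powr (1 / real (k - 2))"
  define N where "N = real p ^ n"
  let ?M = "{x \<in> {x \<in> cycles p n k X.
             bad p n k X \<alpha> {1..l} (restrict x {1..l})
           \<and> \<not> bad p n k X \<alpha> {1..l-1} (restrict x {1..l-1})
           \<and> \<not> bad p n k X \<alpha> ({1..l-1} \<union> {k}) (restrict x ({1..l-1} \<union> {k}))}.
         \<forall>i\<in>{l..k-1}. x i = y i}"
  let ?S = "{x \<in> cycles p n k X. bad p n k X \<alpha> {1..l} (restrict x {1..l}) \<and> (\<forall>i\<in>{l..k-1}. x i = y i)}"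
  have N_pos: "N > 0" unfolding N_def using prime_gt_0_nat[OF assms(1)] by simp
  have \<alpha>_pos: "\<alpha> > 0" and \<alpha>_power: "\<alpha> ^ (k - 2) = \<theta> * \<delta>"
    unfolding \<alpha>_def using assms(3,5,7) by (simp_all add: powr_realpow[symmetric] powr_powr)
  have finite_cycles: "finite (cycles p n k X)"
    using assms(5,6) N_pos N_def by (metis card.infinite mult_pos_pos of_nat_0 zero_less_power less_irrefl)
  have "real (card ?M) * (2 * \<alpha> ^ (k - l - 1) * N ^ (k - l - 1)) \<le> real (card ?S) * (2 * \<alpha> ^ (k - l - 1) * N ^ (k - l - 1))"
    using finite_cycles \<alpha>_pos N_pos by (intro mult_right_mono) (auto intro: card_mono)
  also have "\<dots> \<le> real (card {x \<in> cycles p n k X. x l = y l})"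
    unfolding N_def using finite_cycles assms(3,4,9,10)
    by (intro card_bad_prefix_cycles_with_fixed_tail) auto
  also have "\<dots> \<le> \<alpha> ^ (k - 2) * N ^ (k - 2)"
    using assms(8,9,10) y unfolding \<alpha>_power N_def by (auto simp: PiE_def Pi_def)
  also have "\<dots> = (2 * \<alpha> ^ (k - l - 1) * N ^ (k - l - 1)) * (1/2 * \<alpha> ^ (l - 1) * N ^ (l - 1))"
  proof -
    have "k - 2 = (k - l - 1) + (l - 1)" using assms(9,10) by simp
    then show ?thesis by (simp only: power_add) simp
  qed
  finally show "real (card ?M) \<le> 1/2 * \<alpha> ^ (l - 1) * N ^ (l - 1)"
    using \<alpha>_pos N_pos by (simp add: mult.commute)
qed

end
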